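(* Let $\Theta$ be a finite set, $c\in\mathbb{R}^{\Theta}$, and let $\mathcal{Y}=((b_1,v_1),\dots,(b_m,v_m))$ be a finite ordered list with $b_j\in\mathbb{R}^{\Theta}_{\ge0}\setminus\{0\}$, $v_j\in\mathbb{R}$. Define $\Upsilon_v(b)$ for $b\in\mathbb{R}^\Theta_{\ge0}$ by: if no $j$ satisfies $v_j-c^Tb_j>0$, set $\Upsilon_v(b)=c^Tb$; otherwise, with $j^*$ the first index with $v_{j^*}-c^Tb_{j^*}>0$, set $$\Upsilon_v(b)=c^Tb+\Big(\min_{\vartheta:\,b_{j^*}(\vartheta)>0}\frac{b(\vartheta)}{b_{j^*}(\vartheta)}\Big)(v_{j^*}-c^Tb_{j^*}).$$ Similarly, for a list $((\zeta_1,w_1),\dots,(\zeta_m,w_m))$ with $\zeta_j\in\mathbb{R}^\Theta_{\ge0}\setminus\{0\}$, define $\Upsilon_w(\lambda)$ for $\lambda\in\mathbb{R}^\Theta_{\ge0}$ by: if no $j$ satisfies $w_j-c^T\zeta_j<0$, $\Upsilon_w(\lambda)=c^T\lambda$; otherwise with $j^*$ the first such index, $$\Upsilon_w(\lambda)=c^T\lambda+\Big(\min_{\vartheta:\,\zeta_{j^*}(\vartheta)>0}\frac{\lambda(\vartheta)}{\zeta_{j^*}(\vartheta)}\Big)(w_{j^*}-c^T\zeta_{j^*}).$$ Then the constraint $V\le\Upsilon_v(b)$ is linear in the variables $(V,b)$ and the constraint $W\ge\Upsilon_w(\lambda)$ is linear in $(W,\lambda)$: there exist finitely many affine functions $\ell_1,\dots,\ell_K$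 on $\mathbb{R}^\Theta$ such that for all $V\in\mathbb{R}$, $b\in\mathbb{R}^\Theta_{\ge0}$, $V\le\Upsilon_v(b)$ iff $V\le\ell_k(b)$ for all $k$; and finitely many affine $m_1,\dots,m_L$ such that for all $W\in\mathbb{R}$, $\lambda\in\mathbb{R}^\Theta_{\ge0}$, $W\ge\Upsilon_w(\lambda)$ iff $W\ge m_l(\lambda)$ for all $l$.
   Context: These are the sawtooth approximations used in a point-based value iteration algorithm: $\Upsilon_v$ (SAWTOOTH-A) is computed from a set of "corner" belief-value pairs, whose values form the vector $c$ (the value at the corner point of index $\vartheta$ gives $c(\vartheta)$), and a set $\mathcal{Y}$ of non-corner belief-value pairs; $\Upsilon_w$ (SAWTOOTH-D) is the analogous construction for vectors in $\mathbb{R}^{|\Theta|}$. *)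

theory Defs
  imports "HOL-Analysis.Analysis"
begin

definition dotp :: "('a::finite \<Rightarrow> real) \<Rightarrow> ('a \<Rightarrow> real) \<Rightarrow> real" where
  "dotp c b = (\<Sum>\<theta>\<in>UNIV. c \<theta> * b \<theta>)"

definition aff :: "('a::finite \<Rightarrow> real) \<times> real \<Rightarrow> ('a \<Rightarrow> real) \<Rightarrow> real" where
  "aff p b = snd p + dotp (fst p) b"

definition sawtooth_A ::
  "('a::finite \<Rightarrow> real) \<Rightarrow> (('a \<Rightarrow> real) \<times> real) list \<Rightarrow> ('a \<Rightarrow> real) \<Rightarrow> real" where
  "sawtooth_A c Y b =
     (case find (\<lambda>(bj, vj). vj - dotp c bj > 0) Y of
        None \<Rightarrow> dotp c b
      | Some (bj, vj) \<Rightarrow>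
          dotp c b + Min {b \<theta> / bj \<theta> | \<theta>. bj \<theta> > 0} * (vj - dotp c bj))"

definition sawtooth_D ::
  "('a::finite \<Rightarrow> real) \<Rightarrow> (('a \<Rightarrow> real) \<times> real) list \<Rightarrow> ('a \<Rightarrow> real) \<Rightarrow> real" where
  "sawtooth_D c Z l =
     (case find (\<lambda>(zj, wj). wj - dotp c zj < 0) Z of
        None \<Rightarrow> dotp c l
      | Some (zj, wj) \<Rightarrow>
          dotp c l + Min {l \<theta> / zj \<theta> | \<theta>. zj \<theta> > 0} * (wj - dotp c zj))"

end

theory Submission
  imports Defs
begin

text \<open>
  Once the first index \<open>j\<close> with a positive (for SAWTOOTH-D: negative) gap
  \<open>d = v\<^sub>j - c\<^sup>T b\<^sub>j\<close> is fixed, which does not depend on the argument \<open>b\<close>,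
  the sawtooth value is \<open>c\<^sup>T b + d \<cdot> min\<^sub>\<theta> b(\<theta>) / b\<^sub>j(\<theta>)\<close>.  For \<open>d > 0\<close>
  this is the minimum of the finitely many affine functions
  \<open>c\<^sup>T b + d \<cdot> b(\<theta>) / b\<^sub>j(\<theta>)\<close>, so its hypograph is cut out by them.
  SAWTOOTH-D is the negative of SAWTOOTH-A for \<open>-c\<close> and negated values,
  which turns the hypograph statement into the epigraph statement.
\<close>

lemma find_map: "find P (map f xs) = map_option f (find (P \<circ> f) xs)"
  by (induction xs) auto

lemma dotp_uminus_left: "dotp (- c) b = - dotp c b"
  by (simp add: dotp_def sum_negf)

lemma aff_uminus: "aff (- p) b = - aff p b"
  by (simp add: aff_def dotp_uminus_left)

lemma dotp_add_unit_left:
  "dotp (\<lambda>\<theta>. c \<theta> + (if \<theta> = t then k else 0)) b = dotp c b + k * b t"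
proof -
  have "(c \<theta> + (if \<theta> = t then k else 0)) * b \<theta> = c \<theta> * b \<theta> + (if \<theta> = t then k * b t else 0)" for \<theta>
    by (simp add: distrib_right)
  then show ?thesis
    by (simp add: dotp_def sum.distrib)
qed

lemma le_add_Min_mult_iff:
  fixes x d :: real
  assumes "finite S" "S \<noteq> {}" "d > 0"
  shows "V \<le> x + Min S * d \<longleftrightarrow> (\<forall>s\<in>S. V \<le> x + s * d)"
proof -
  have "mono (\<lambda>s. x + s * d)"
    using \<open>d > 0\<close> by (intro monoI) simp
  then have "x + Min S * d = Min ((\<lambda>s. x + s * d) ` S)"
    using mono_Min_commute assms by blast
  then show ?thesis
    using assms by simp
qed

lemma sawtooth_D_eq_uminus_sawtooth_A:
  "sawtooth_D c Z l = - sawtooth_A (- c) (map (\<lambda>(z, w). (z, - w)) Z) l"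
  unfolding sawtooth_D_def sawtooth_A_def find_map
  by (cases "find (\<lambda>(z, w). w - dotp c z < 0) Z")
     (auto simp: dotp_uminus_left comp_def case_prod_unfold algebra_simps)

lemma sawtooth_A_hypograph_finite_affine:
  assumes "\<forall>(bj, vj) \<in> set Y. \<exists>\<theta>. bj \<theta> > 0"
  shows "\<exists>Ls. finite Ls \<and> (\<forall>V b. V \<le> sawtooth_A c Y b \<longleftrightarrow> (\<forall>p \<in> Ls. V \<le> aff p b))"
proof (cases "find (\<lambda>(bj, vj). vj - dotp c bj > 0) Y")
  case None
  then have "sawtooth_A c Y b = aff (c, 0) b" for b
    by (simp add: sawtooth_A_def aff_def)
  then show ?thesis
    by (intro exI[of _ "{(c, 0)}"]) simp
next
  case (Some jv)
  then obtain bj vj where found: "find (\<lambda>(bj, vj). vj - dotp c bj > 0) Y = Some (bj, vj)"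
    by (cases jv) simp
  then have "(bj, vj) \<in> set Y" and "vj - dotp c bj > 0"
    by (metis find_Some_iff nth_mem, metis (mono_tags, lifting) find_Some_iff case_prod_conv)
  define d where "d = vj - dotp c bj"
  define facet where "facet t = (\<lambda>\<theta>. c \<theta> + (if \<theta> = t then d / bj t else 0), 0 :: real)" for t
  have "d > 0"
    using \<open>vj - dotp c bj > 0\<close> by (simp add: d_def)
  obtain t where "bj t > 0"
    using \<open>(bj, vj) \<in> set Y\<close> assms by auto
  then have ratios_nonempty: "{t. bj t > 0} \<noteq> {}"
    by blast
  have "V \<le> sawtooth_A c Y b \<longleftrightarrow> (\<forall>p \<in> facet ` {t. bj t > 0}. V \<le> aff p b)" for V b
  proof -
    have ratios: "{b \<theta> / bj \<theta> |\<theta>. bj \<theta> > 0} = (\<lambda>t. b t / bj t) ` {t. bj t > 0}"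
      by blast
    have "sawtooth_A c Y b = dotp c b + Min ((\<lambda>t. b t / bj t) ` {t. bj t > 0}) * d"
      unfolding sawtooth_A_def found d_def by (simp add: ratios)
    moreover have "aff (facet t) b = dotp c b + b t / bj t * d" for t
      by (simp add: facet_def aff_def dotp_add_unit_left)
    ultimately show ?thesis
      using le_add_Min_mult_iff[OF _ _ \<open>d > 0\<close>] ratios_nonempty by simp
  qed
  moreover have "finite (facet ` {t. bj t > 0})"
    by simp
  ultimately show ?thesis
    by (intro exI[of _ "facet ` {t. bj t > 0}"] conjI allI)
qed

lemma sawtooth_D_epigraph_finite_affine:
  assumes "\<forall>(zj, wj) \<in> set Z. \<exists>\<theta>. zj \<theta> > 0"
  shows "\<exists>Ms. finite Ms \<and> (\<forall>W l. W \<ge> sawtooth_D c Z l \<longleftrightarrow> (\<forall>p \<in> Ms. W \<ge> aff p l))"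
proof -
  have "\<forall>(zj, wj) \<in> set (map (\<lambda>(z, w). (z, - w)) Z). \<exists>\<theta>. zj \<theta> > 0"
    using assms by auto
  from sawtooth_A_hypograph_finite_affine[OF this, of "- c"] obtain Ls where "finite Ls"
    and Ls: "\<forall>V l. V \<le> sawtooth_A (- c) (map (\<lambda>(z, w). (z, - w)) Z) l \<longleftrightarrow> (\<forall>p \<in> Ls. V \<le> aff p l)"
    by (elim exE conjE)
  have "W \<ge> sawtooth_D c Z l \<longleftrightarrow> (\<forall>p \<in> uminus ` Ls. W \<ge> aff p l)" for W l
    using Ls by (simp add: sawtooth_D_eq_uminus_sawtooth_A aff_uminus minus_le_iff)
  moreover have "finite (uminus ` Ls)"
    using \<open>finite Ls\<close> by simp
  ultimately show ?thesis
    by (intro exI[of _ "uminus ` Ls"] conjI allI)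
qed

lemma nonneg_nonzero_imp_ex_pos:
  fixes f :: "'a \<Rightarrow> real"
  assumes "\<forall>\<theta>. f \<theta> \<ge> 0" "f \<noteq> (\<lambda>_. 0)"
  shows "\<exists>\<theta>. f \<theta> > 0"
  using assms by (metis less_eq_real_def)

theorem lemma4:
  fixes c :: "'a::finite \<Rightarrow> real"
    and Y :: "(('a \<Rightarrow> real) \<times> real) list"
    and Z :: "(('a \<Rightarrow> real) \<times> real) list"
  assumes Y_nonneg: "\<forall>(bj, vj) \<in> set Y. (\<forall>\<theta>. bj \<theta> \<ge> 0) \<and> bj \<noteq> (\<lambda>_. 0)"
    and Z_nonneg: "\<forall>(zj, wj) \<in> set Z. (\<forall>\<theta>. zj \<theta> \<ge> 0) \<and> zj \<noteq> (\<lambda>_. 0)"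
  shows "(\<exists>Ls :: (('a \<Rightarrow> real) \<times> real) set. finite Ls \<and>
            (\<forall>V b. (\<forall>\<theta>. b \<theta> \<ge> 0) \<longrightarrow>
               (V \<le> sawtooth_A c Y b \<longleftrightarrow> (\<forall>p \<in> Ls. V \<le> aff p b))))
       \<and> (\<exists>Ms :: (('a \<Rightarrow> real) \<times> real) set. finite Ms \<and>
            (\<forall>W l. (\<forall>\<theta>. l \<theta> \<ge> 0) \<longrightarrow>
               (W \<ge> sawtooth_D c Z l \<longleftrightarrow> (\<forall>p \<in> Ms. W \<ge> aff p l))))"
proof (intro conjI)
  have "\<forall>(bj, vj) \<in> set Y. \<exists>\<theta>. bj \<theta> > 0"
    using Y_nonneg nonneg_nonzero_imp_ex_pos by fast
  from sawtooth_A_hypograph_finite_affine[OF this, of c]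
  show "\<exists>Ls. finite Ls \<and> (\<forall>V b. (\<forall>\<theta>. b \<theta> \<ge> 0) \<longrightarrow>
          (V \<le> sawtooth_A c Y b \<longleftrightarrow> (\<forall>p \<in> Ls. V \<le> aff p b)))"
    by auto
  have "\<forall>(zj, wj) \<in> set Z. \<exists>\<theta>. zj \<theta> > 0"
    using Z_nonneg nonneg_nonzero_imp_ex_pos by fast
  from sawtooth_D_epigraph_finite_affine[OF this, of c]
  show "\<exists>Ms. finite Ms \<and> (\<forall>W l. (\<forall>\<theta>. l \<theta> \<ge> 0) \<longrightarrow>
          (W \<ge> sawtooth_D c Z l \<longleftrightarrow> (\<forall>p \<in> Ms. W \<ge> aff p l)))"
    by auto
qed

end
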